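(* For all $\lambda\mu\mathrm{T}$-terms $t_1,t_2$: if $t_1=t_2$ in $\lambda\mu\mathrm{T}$, then $t_1^*=t_2^*$ in Gödel's T.
   Context: The calculus $\lambda\mu\mathrm{T}$. Types: $\rho ::= \mathbb{N} \mid \sigma\to\tau$. Over infinite sets of $\lambda$-variables $x,y,\dots$ and $\mu$-variables $\alpha,\beta,\gamma,\dots$, terms and commands are mutually defined by $t,r,s ::= x \mid \lambda x{:}\rho.r \mid t\,s \mid \mu\alpha{:}\rho.c \mid 0 \mid \mathsf{S}\,t \mid \mathsf{nrec}_\rho\ r\ s\ t$ and $c ::= [\alpha]t$ (type annotations often omitted). $FCV(t)$ denotes the free $\mu$-variables; $t[x:=r]$ is capture-avoiding substitution. Numerals: $\underline{n} := \mathsf{S}^n 0$. Contexts: $E ::= \Box \mid E\,t \mid \mathsf{S}\,E \mid \mathsf{nrec}\ r\ s\ E$; $E[u]$ fills the hole with $u$. Structural substitution $t[\alpha:=\beta E]$ is defined homomorphically on all constructs (capture-avoiding) except $([\alpha]u)[\alpha:=\beta E] := [\beta]E[u[\alpha:=\beta E]]$ (and $([\gamma]u)[\alpha:=\beta E]:=[\gamma](u[\alpha:=\beta E])$ for $\gamma\neq\alpha$). Reduction $\to$ of $\lambda\mu\mathrm{T}$ is the compatible closure (on terms and commands) of: ($\beta$) $(\lambda x.t)r\to t[x:=r]$; ($\mu\mathsf{S}$) $\mathsf{S}(\mu\alpha.c)\to\mu\alpha.c[\alpha:=\alpha(\mathsf{S}\,\Box)]$; ($\mu R$) $(\mu\alpha.c)s\to\mu\alpha.c[\alpha:=\alpha(\Box\,s)]$;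 ($\mu\eta$) $\mu\alpha.[\alpha]t\to t$ if $\alpha\notin FCV(t)$; ($\mu i$) $[\alpha]\mu\beta.c\to c[\beta:=\alpha\,\Box]$; ($0$) $\mathsf{nrec}\ r\ s\ 0\to r$; ($\mathsf{S}$) $\mathsf{nrec}\ r\ s\ (\mathsf{S}\,\underline{n})\to s\ \underline{n}\ (\mathsf{nrec}\ r\ s\ \underline{n})$; ($\mu\mathbb{N}$) $\mathsf{nrec}\ r\ s\ (\mu\alpha.c)\to\mu\alpha.c[\alpha:=\alpha(\mathsf{nrec}\ r\ s\ \Box)]$; $=$ is its reflexive–symmetric–transitive closure. Gödel's T ($\lambda\mathrm{T}$) has terms $t ::= x\mid\lambda x{:}\rho.r\mid ts\mid 0\mid\mathsf{S}\,t\mid\mathsf{nrec}_\rho\ r\ s\ t$, reduction the compatible closure of $(\lambda x.t)r\to t[x:=r]$, $\mathsf{nrec}\ r\ s\ 0\to r$, $\mathsf{nrec}\ r\ s\ (\mathsf{S}\,t)\to s\ t\ (\mathsf{nrec}\ r\ s\ t)$, and conversion $=$ its reflexive–symmetric–transitive closure. CPS-translation: for $\lambda\mathrm{T}$-terms, $t\circ r:=\lambda k.t(\lambda l.l\,r\,k)$ and $\overline{t}:=\lambda k.k\,t$ (fresh $k,l$). To each $\mu$-variable $\alpha$ associate a fresh $\lambda$-variable $k_\alpha$. The translation is: $x^*:=\lambda k.xk$; $(\lambda x.t)^*:=\lambda k.k(\lambda x.t^* )$; $(tr)^*:=t^*\circ r^*$; $0^*:=\overline{0}$; $(\mathsf{S}\,t)^*:=\lambda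 k.t^*(\lambda l.k(\mathsf{S}\,l))$; $(\mathsf{nrec}_\rho\ r\ s\ t)^*:=\lambda k.t^*(\lambda l.\mathsf{nrec}\ r^*\ s'\ l\ k)$ where $s':=\lambda x p.(s^*\circ\overline{x})\circ p$; $(\mu\alpha.c)^*:=\lambda k_\alpha.c^*$; $([\alpha]t)^*:=t^*k_\alpha$. *)

theory Defs
  imports Main
begin

section \<open>lambda-mu-T: untyped syntax with de Bruijn indices\<close>

text \<open>Two separate index spaces: LVar i refers to lambda-binders (LLam),
  the index of LNamed a u refers to mu-binders (LMu).\<close>

datatype lmtm =
    LVar nat
  | LLam lmtm
  | LApp lmtm lmtm
  | LMu lmcmd
  | LZero
  | LSuc lmtm
  | LNrec lmtm lmtm lmtm
and lmcmd = LNamed nat lmtm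

datatype ectx = Hole | EApp ectx lmtm | ESuc ectx | ENrec lmtm lmtm ectx

primrec fill :: "ectx \<Rightarrow> lmtm \<Rightarrow> lmtm" where
  "fill Hole u = u"
| "fill (EApp E t) u = LApp (fill E u) t"
| "fill (ESuc E) u = LSuc (fill E u)"
| "fill (ENrec r s E) u = LNrec r s (fill E u)"

primrec liftLt :: "nat \<Rightarrow> lmtm \<Rightarrow> lmtm" and liftLc :: "nat \<Rightarrow> lmcmd \<Rightarrow> lmcmd" where
  "liftLt k (LVar i) = LVar (if i < k then i else Suc i)"
| "liftLt k (LLam t) = LLam (liftLt (Suc k) t)"
| "liftLt k (LApp t s) = LApp (liftLt k t) (liftLt k s)"
| "liftLt k (LMu c) = LMu (liftLc k c)"
| "liftLt k LZero = LZero"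
| "liftLt k (LSuc t) = LSuc (liftLt k t)"
| "liftLt k (LNrec r s t) = LNrec (liftLt k r) (liftLt k s) (liftLt k t)"
| "liftLc k (LNamed a u) = LNamed a (liftLt k u)"

primrec liftMt :: "nat \<Rightarrow> lmtm \<Rightarrow> lmtm" and liftMc :: "nat \<Rightarrow> lmcmd \<Rightarrow> lmcmd" where
  "liftMt k (LVar i) = LVar i"
| "liftMt k (LLam t) = LLam (liftMt k t)"
| "liftMt k (LApp t s) = LApp (liftMt k t) (liftMt k s)"
| "liftMt k (LMu c) = LMu (liftMc (Suc k) c)"
| "liftMt k LZero = LZero"
| "liftMt k (LSuc t) = LSuc (liftMt k t)"
| "liftMt k (LNrec r s t) = LNrec (liftMt k r) (liftMt k s) (liftMt k t)"
| "liftMc k (LNamed a u) = LNamed (if a < k then a else Suc a) (liftMt k u)"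

text \<open>Removal of a mu-binder index k that does not occur: indices above k go down by one.\<close>
primrec dropMt :: "nat \<Rightarrow> lmtm \<Rightarrow> lmtm" and dropMc :: "nat \<Rightarrow> lmcmd \<Rightarrow> lmcmd" where
  "dropMt k (LVar i) = LVar i"
| "dropMt k (LLam t) = LLam (dropMt k t)"
| "dropMt k (LApp t s) = LApp (dropMt k t) (dropMt k s)"
| "dropMt k (LMu c) = LMu (dropMc (Suc k) c)"
| "dropMt k LZero = LZero"
| "dropMt k (LSuc t) = LSuc (dropMt k t)"
| "dropMt k (LNrec r s t) = LNrec (dropMt k r) (dropMt k s) (dropMt k t)"
| "dropMc k (LNamed a u) = LNamed (if a < k then a else a - 1) (dropMt k u)"

primrec liftLe :: "nat \<Rightarrow> ectx \<Rightarrow> ectx" where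
  "liftLe k Hole = Hole"
| "liftLe k (EApp E t) = EApp (liftLe k E) (liftLt k t)"
| "liftLe k (ESuc E) = ESuc (liftLe k E)"
| "liftLe k (ENrec r s E) = ENrec (liftLt k r) (liftLt k s) (liftLe k E)"

primrec liftMe :: "nat \<Rightarrow> ectx \<Rightarrow> ectx" where
  "liftMe k Hole = Hole"
| "liftMe k (EApp E t) = EApp (liftMe k E) (liftMt k t)"
| "liftMe k (ESuc E) = ESuc (liftMe k E)"
| "liftMe k (ENrec r s E) = ENrec (liftMt k r) (liftMt k s) (liftMe k E)"

primrec fcvt :: "lmtm \<Rightarrow> nat set" and fcvc :: "lmcmd \<Rightarrow> nat set" where
  "fcvt (LVar i) = {}"
| "fcvt (LLam t) = fcvt t"
| "fcvt (LApp t s) = fcvt t \<union> fcvt s"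
| "fcvt (LMu c) = {j. Suc j \<in> fcvc c}"
| "fcvt LZero = {}"
| "fcvt (LSuc t) = fcvt t"
| "fcvt (LNrec r s t) = fcvt r \<union> fcvt s \<union> fcvt t"
| "fcvc (LNamed a u) = insert a (fcvt u)"

primrec substLt :: "nat \<Rightarrow> lmtm \<Rightarrow> lmtm \<Rightarrow> lmtm" and substLc :: "nat \<Rightarrow> lmtm \<Rightarrow> lmcmd \<Rightarrow> lmcmd" where
  "substLt k r (LVar i) = (if i < k then LVar i else if i = k then r else LVar (i - 1))"
| "substLt k r (LLam t) = LLam (substLt (Suc k) (liftLt 0 r) t)"
| "substLt k r (LApp t s) = LApp (substLt k r t) (substLt k r s)"
| "substLt k r (LMu c) = LMu (substLc k (liftMt 0 r) c)"
| "substLt k r LZero = LZero"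
| "substLt k r (LSuc t) = LSuc (substLt k r t)"
| "substLt k r (LNrec r' s t) = LNrec (substLt k r r') (substLt k r s) (substLt k r t)"
| "substLc k r (LNamed a u) = LNamed a (substLt k r u)"

text \<open>Structural substitution t[alpha := beta E] (alpha = index k, beta = index b):
  every command [k]u becomes [b]E[u[k:=b E]]; other commands are left unchanged.\<close>
primrec msubt :: "nat \<Rightarrow> nat \<Rightarrow> ectx \<Rightarrow> lmtm \<Rightarrow> lmtm"
  and msubc :: "nat \<Rightarrow> nat \<Rightarrow> ectx \<Rightarrow> lmcmd \<Rightarrow> lmcmd" where
  "msubt k b E (LVar i) = LVar i"
| "msubt k b E (LLam t) = LLam (msubt k b (liftLe 0 E) t)"
| "msubt k b E (LApp t s) = LApp (msubt k b E t) (msubt k b E s)"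
| "msubt k b E (LMu c) = LMu (msubc (Suc k) (Suc b) (liftMe 0 E) c)"
| "msubt k b E LZero = LZero"
| "msubt k b E (LSuc t) = LSuc (msubt k b E t)"
| "msubt k b E (LNrec r s t) = LNrec (msubt k b E r) (msubt k b E s) (msubt k b E t)"
| "msubc k b E (LNamed a u) =
     (if a = k then LNamed b (fill E (msubt k b E u)) else LNamed a (msubt k b E u))"

definition lnum :: "nat \<Rightarrow> lmtm" where
  "lnum n = (LSuc ^^ n) LZero"

inductive lmred_t :: "lmtm \<Rightarrow> lmtm \<Rightarrow> bool" and lmred_c :: "lmcmd \<Rightarrow> lmcmd \<Rightarrow> bool" where
  beta: "lmred_t (LApp (LLam t) r) (substLt 0 r t)"
| muS: "lmred_t (LSuc (LMu c)) (LMu (msubc 0 0 (ESuc Hole) c))"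
| muR: "lmred_t (LApp (LMu c) s) (LMu (msubc 0 0 (EApp Hole (liftMt 0 s)) c))"
| muEta: "0 \<notin> fcvt t \<Longrightarrow> lmred_t (LMu (LNamed 0 t)) (dropMt 0 t)"
| muI: "lmred_c (LNamed a (LMu c)) (dropMc 0 (msubc 0 (Suc a) Hole c))"
| nrec0: "lmred_t (LNrec r s LZero) r"
| nrecS: "lmred_t (LNrec r s (LSuc (lnum n))) (LApp (LApp s (lnum n)) (LNrec r s (lnum n)))"
| muN: "lmred_t (LNrec r s (LMu c)) (LMu (msubc 0 0 (ENrec (liftMt 0 r) (liftMt 0 s) Hole) c))"
| c_lam: "lmred_t t t' \<Longrightarrow> lmred_t (LLam t) (LLam t')"
| c_appL: "lmred_t t t' \<Longrightarrow> lmred_t (LApp t s) (LApp t' s)"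
| c_appR: "lmred_t s s' \<Longrightarrow> lmred_t (LApp t s) (LApp t s')"
| c_mu: "lmred_c c c' \<Longrightarrow> lmred_t (LMu c) (LMu c')"
| c_suc: "lmred_t t t' \<Longrightarrow> lmred_t (LSuc t) (LSuc t')"
| c_nrec1: "lmred_t r r' \<Longrightarrow> lmred_t (LNrec r s t) (LNrec r' s t)"
| c_nrec2: "lmred_t s s' \<Longrightarrow> lmred_t (LNrec r s t) (LNrec r s' t)"
| c_nrec3: "lmred_t t t' \<Longrightarrow> lmred_t (LNrec r s t) (LNrec r s t')"
| c_named: "lmred_t t t' \<Longrightarrow> lmred_c (LNamed a t) (LNamed a t')"

definition lmconv :: "lmtm \<Rightarrow> lmtm \<Rightarrow> bool" where
  "lmconv = equivclp lmred_t"

section \<open>Goedel's T: untyped syntax with de Bruijn indices\<close>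

datatype tm = Var nat | Lam tm | App tm tm | Zero | TSuc tm | Nrec tm tm tm

primrec liftT :: "nat \<Rightarrow> tm \<Rightarrow> tm" where
  "liftT k (Var i) = Var (if i < k then i else Suc i)"
| "liftT k (Lam t) = Lam (liftT (Suc k) t)"
| "liftT k (App t s) = App (liftT k t) (liftT k s)"
| "liftT k Zero = Zero"
| "liftT k (TSuc t) = TSuc (liftT k t)"
| "liftT k (Nrec r s t) = Nrec (liftT k r) (liftT k s) (liftT k t)"

primrec substT :: "nat \<Rightarrow> tm \<Rightarrow> tm \<Rightarrow> tm" where
  "substT k r (Var i) = (if i < k then Var i else if i = k then r else Var (i - 1))"
| "substT k r (Lam t) = Lam (substT (Suc k) (liftT 0 r) t)"
| "substT k r (App t s) = App (substT k r t) (substT k r s)"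
| "substT k r Zero = Zero"
| "substT k r (TSuc t) = TSuc (substT k r t)"
| "substT k r (Nrec r' s t) = Nrec (substT k r r') (substT k r s) (substT k r t)"

inductive Tred :: "tm \<Rightarrow> tm \<Rightarrow> bool" where
  beta: "Tred (App (Lam t) r) (substT 0 r t)"
| nrec0: "Tred (Nrec r s Zero) r"
| nrecS: "Tred (Nrec r s (TSuc t)) (App (App s t) (Nrec r s t))"
| c_lam: "Tred t t' \<Longrightarrow> Tred (Lam t) (Lam t')"
| c_appL: "Tred t t' \<Longrightarrow> Tred (App t s) (App t' s)"
| c_appR: "Tred s s' \<Longrightarrow> Tred (App t s) (App t s')"
| c_suc: "Tred t t' \<Longrightarrow> Tred (TSuc t) (TSuc t')"
| c_nrec1: "Tred r r' \<Longrightarrow> Tred (Nrec r s t) (Nrec r' s t)"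
| c_nrec2: "Tred s s' \<Longrightarrow> Tred (Nrec r s t) (Nrec r s' t)"
| c_nrec3: "Tred t t' \<Longrightarrow> Tred (Nrec r s t) (Nrec r s t')"

definition Tconv :: "tm \<Rightarrow> tm \<Rightarrow> bool" where
  "Tconv = equivclp Tred"

text \<open>t \<circ> r := \<lambda>k. t (\<lambda>l. l r k)\<close>
definition comp :: "tm \<Rightarrow> tm \<Rightarrow> tm" where
  "comp t r = Lam (App (liftT 0 t) (Lam (App (App (Var 0) (liftT 0 (liftT 0 r))) (Var 1))))"

definition ovl :: "tm \<Rightarrow> tm" where
  "ovl t = Lam (App (Var 0) (liftT 0 t))"

text \<open>cpst L M t: L (resp. M) gives the T-index of each lambda-variable x
  (resp. of the variable k_alpha associated to each mu-variable alpha).\<close>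
primrec cpst :: "(nat \<Rightarrow> nat) \<Rightarrow> (nat \<Rightarrow> nat) \<Rightarrow> lmtm \<Rightarrow> tm"
  and cpsc :: "(nat \<Rightarrow> nat) \<Rightarrow> (nat \<Rightarrow> nat) \<Rightarrow> lmcmd \<Rightarrow> tm" where
  "cpst L M (LVar i) = Lam (App (Var (Suc (L i))) (Var 0))"
| "cpst L M (LLam t) =
     Lam (App (Var 0) (Lam (cpst (case_nat 0 (\<lambda>i. Suc (Suc (L i)))) (\<lambda>j. Suc (Suc (M j))) t)))"
| "cpst L M (LApp t r) = comp (cpst L M t) (cpst L M r)"
| "cpst L M (LMu c) = Lam (cpsc (\<lambda>i. Suc (L i)) (case_nat 0 (\<lambda>j. Suc (M j))) c)"
| "cpst L M LZero = ovl Zero"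
| "cpst L M (LSuc t) = Lam (App (liftT 0 (cpst L M t)) (Lam (App (Var 1) (TSuc (Var 0)))))"
| "cpst L M (LNrec r s t) =
     (let s' = Lam (Lam (comp (comp (liftT 0 (liftT 0 (cpst L M s))) (ovl (Var 1))) (Var 0)))
      in Lam (App (liftT 0 (cpst L M t))
                  (Lam (App (Nrec (liftT 0 (liftT 0 (cpst L M r))) (liftT 0 (liftT 0 s')) (Var 0))
                            (Var 1)))))"
| "cpsc L M (LNamed a t) = App (cpst L M t) (Var (M a))"

text \<open>Top-level translation: free lambda-variable i becomes T-variable 2i,
  and k_alpha for free mu-variable j is the T-variable 2j+1 (all distinct).\<close>
definition cps :: "lmtm \<Rightarrow> tm" where
  "cps t = cpst (\<lambda>i. 2 * i) (\<lambda>j. 2 * j + 1) t"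

end

theory Submission
  imports Defs
begin

text \<open>
  Since conversion is the equivalence closure of one-step reduction, it suffices to show
  that each reduction step \<open>t \<rightarrow> t'\<close> yields \<open>t\<^sup>* = t'\<^sup>*\<close> in T.  To make the induction
  go through, the translation is generalised to \<open>cpsG \<rho> \<kappa>\<close>, which interprets lambda-variables
  and the continuation variables of mu-variables by arbitrary T-terms; the translation
  is the instance with variable environments.
\<close>

section \<open>Parallel substitution in Goedel's T\<close>

primrec upr :: "(nat \<Rightarrow> nat) \<Rightarrow> nat \<Rightarrow> nat" where
  "upr f 0 = 0" | "upr f (Suc i) = Suc (f i)"

primrec ren :: "(nat \<Rightarrow> nat) \<Rightarrow> tm \<Rightarrow> tm" where
  "ren f (Var i) = Var (f i)"
| "ren f (Lam t) = Lam (ren (upr f) t)"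
| "ren f (App t s) = App (ren f t) (ren f s)"
| "ren f Zero = Zero"
| "ren f (TSuc t) = TSuc (ren f t)"
| "ren f (Nrec r s t) = Nrec (ren f r) (ren f s) (ren f t)"

definition up :: "(nat \<Rightarrow> tm) \<Rightarrow> nat \<Rightarrow> tm" where
  "up \<sigma> i = (case i of 0 \<Rightarrow> Var 0 | Suc j \<Rightarrow> ren Suc (\<sigma> j))"

primrec sub :: "(nat \<Rightarrow> tm) \<Rightarrow> tm \<Rightarrow> tm" where
  "sub \<sigma> (Var i) = \<sigma> i"
| "sub \<sigma> (Lam t) = Lam (sub (up \<sigma>) t)"
| "sub \<sigma> (App t s) = App (sub \<sigma> t) (sub \<sigma> s)"
| "sub \<sigma> Zero = Zero"
| "sub \<sigma> (TSuc t) = TSuc (sub \<sigma> t)"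
| "sub \<sigma> (Nrec r s t) = Nrec (sub \<sigma> r) (sub \<sigma> s) (sub \<sigma> t)"

lemma upr_comp: "(\<lambda>a. upr f (upr g a)) = upr (\<lambda>a. f (g a))"
  by (rule ext, rename_tac z, case_tac z) auto

lemma ren_ren: "ren f (ren g t) = ren (\<lambda>a. f (g a)) t"
  by (induction t arbitrary: f g) (auto simp: upr_comp)

lemma sub_ren: "sub \<sigma> (ren f t) = sub (\<lambda>a. \<sigma> (f a)) t"
proof (induction t arbitrary: \<sigma> f)
  case (Lam t)
  have "(\<lambda>a. up \<sigma> (upr f a)) = up (\<lambda>a. \<sigma> (f a))"
    by (rule ext, rename_tac z, case_tac z) (auto simp: up_def)
  then show ?case using Lam by simp
qed auto

lemma ren_sub: "ren f (sub \<sigma> t) = sub (\<lambda>a. ren f (\<sigma> a)) t"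
proof (induction t arbitrary: \<sigma> f)
  case (Lam t)
  have "(\<lambda>a. ren (upr f) (up \<sigma> a)) = up (\<lambda>a. ren f (\<sigma> a))"
    by (rule ext, rename_tac z, case_tac z) (auto simp: up_def ren_ren)
  then show ?case using Lam by simp
qed auto

lemma sub_sub: "sub \<sigma> (sub \<tau> t) = sub (\<lambda>a. sub \<sigma> (\<tau> a)) t"
proof (induction t arbitrary: \<sigma> \<tau>)
  case (Lam t)
  have "(\<lambda>a. sub (up \<sigma>) (up \<tau> a)) = up (\<lambda>a. sub \<sigma> (\<tau> a))"
    by (rule ext, rename_tac z, case_tac z) (auto simp: up_def sub_ren ren_sub)
  then show ?case using Lam by simp
qed auto

lemma ren_as_sub: "ren f t = sub (\<lambda>a. Var (f a)) t"
proof (induction t arbitrary: f)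
  case (Lam t)
  have "up (\<lambda>a. Var (f a)) = (\<lambda>a. Var (upr f a))"
    by (rule ext, rename_tac z, case_tac z) (auto simp: up_def)
  then show ?case using Lam by simp
qed auto

lemma sub_Var [simp]: "sub Var t = t"
proof (induction t)
  case (Lam t)
  have "up Var = Var" by (rule ext, rename_tac z, case_tac z) (auto simp: up_def)
  then show ?case using Lam by simp
qed auto

lemma up_eq: "up \<sigma> = case_nat (Var 0) (\<lambda>j. sub (\<lambda>i. Var (Suc i)) (\<sigma> j))"
  by (rule ext, rename_tac z, case_tac z) (auto simp: up_def ren_as_sub)

lemma liftT_sub: "liftT k t = sub (\<lambda>i. Var (if i < k then i else Suc i)) t"
proof (induction t arbitrary: k)
  case (Lam t)
  have "up (\<lambda>i. Var (if i < k then i else Suc i)) = (\<lambda>i. Var (if i < Suc k then i else Suc i))"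
    by (rule ext, rename_tac z, case_tac z) (auto simp: up_eq)
  then show ?case using Lam by simp
qed auto

lemma substT_sub: "substT k r t = sub (\<lambda>i. if i < k then Var i else if i = k then r else Var (i - 1)) t"
proof (induction t arbitrary: k r)
  case (Lam t)
  have "up (\<lambda>i. if i < k then Var i else if i = k then r else Var (i - 1))
      = (\<lambda>i. if i < Suc k then Var i else if i = Suc k then liftT 0 r else Var (i - 1))"
    by (rule ext, rename_tac z, case_tac z) (auto simp: up_eq liftT_sub)
  then show ?case using Lam by simp
qed auto

text \<open>From now on every lifting and substitution is normalised into a single sub.\<close>
lemmas sub_normalise [simp] = up_eq liftT_sub substT_sub sub_sub

section \<open>Convertibility in Goedel's T\<close>

lemma equivclp_map:
  assumes hstep: "\<And>a b. r a b \<Longrightarrow> equivclp q (f a) (f b)" and "equivclp r a b"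
  shows "equivclp q (f a) (f b)"
  using assms(2)
proof (induction rule: equivclp_induct)
  case (step y z)
  then show ?case using hstep[of y z] hstep[of z y] by (metis equivclp_sym equivclp_trans)
qed simp

lemma Tconv_refl [simp]: "Tconv a a" by (simp add: Tconv_def)
lemma Tconv_sym: "Tconv a b \<Longrightarrow> Tconv b a" by (simp add: Tconv_def equivclp_sym)
lemma Tconv_trans [trans]: "Tconv a b \<Longrightarrow> Tconv b c \<Longrightarrow> Tconv a c"
  unfolding Tconv_def by (rule equivclp_trans)
lemma Tred_conv: "Tred a b \<Longrightarrow> Tconv a b" by (auto simp: Tconv_def)

lemma Tconv_cong: "(\<And>a b. Tred a b \<Longrightarrow> Tred (f a) (f b)) \<Longrightarrow> Tconv a b \<Longrightarrow> Tconv (f a) (f b)"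
  unfolding Tconv_def by (rule equivclp_map) auto

lemma Tconv_Lam: "Tconv a b \<Longrightarrow> Tconv (Lam a) (Lam b)"
  by (rule Tconv_cong) (auto intro: Tred.intros)
lemma Tconv_AppL: "Tconv a b \<Longrightarrow> Tconv (App a c) (App b c)"
  by (rule Tconv_cong[where f="\<lambda>x. App x c"]) (auto intro: Tred.intros)
lemma Tconv_AppR: "Tconv a b \<Longrightarrow> Tconv (App c a) (App c b)"
  by (rule Tconv_cong[where f="\<lambda>x. App c x"]) (auto intro: Tred.intros)
lemma Tconv_App: "Tconv a b \<Longrightarrow> Tconv c d \<Longrightarrow> Tconv (App a c) (App b d)"
  by (meson Tconv_AppL Tconv_AppR Tconv_trans)
lemma Tconv_Nrec: "Tconv a a' \<Longrightarrow> Tconv b b' \<Longrightarrow> Tconv (Nrec a b c) (Nrec a' b' c)"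
proof -
  assume "Tconv a a'" "Tconv b b'"
  then have "Tconv (Nrec a b c) (Nrec a' b c)" "Tconv (Nrec a' b c) (Nrec a' b' c)"
    by (auto intro!: Tconv_cong[where f="\<lambda>x. Nrec x b c"] Tconv_cong[where f="\<lambda>x. Nrec a' x c"]
        intro: Tred.intros)
  then show ?thesis by (rule Tconv_trans)
qed

lemma Tred_sub: "Tred a b \<Longrightarrow> Tred (sub \<sigma> a) (sub \<sigma> b)"
proof (induction arbitrary: \<sigma> rule: Tred.induct)
  case (beta t r)
  have "sub \<sigma> (substT 0 r t) = substT 0 (sub \<sigma> r) (sub (up \<sigma>) t)"
    by (simp del: up_eq, simp, rule arg_cong[where f="\<lambda>f. sub f t"], rule ext,
        rename_tac z, case_tac z, simp_all)
  then show ?case by (simp only: sub.simps) (metis Tred.beta sub.simps(2))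
qed (auto intro: Tred.intros)

lemma Tconv_sub: "Tconv a b \<Longrightarrow> Tconv (sub \<sigma> a) (sub \<sigma> b)"
  by (rule Tconv_cong) (rule Tred_sub)

lemma Tconv_lift: "Tconv a b \<Longrightarrow> Tconv (liftT k a) (liftT k b)"
  by (simp only: liftT_sub) (rule Tconv_sub)

lemma Tconv_beta: "Tconv (App (Lam t) r) (sub (case_nat r Var) t)"
proof -
  have "substT 0 r t = sub (case_nat r Var) t"
    by (simp, rule arg_cong[where f="\<lambda>f. sub f t"], rule ext, rename_tac z, case_tac z, simp_all)
  then show ?thesis using Tred.beta[of t r] Tred_conv by metis
qed

lemma beta_head: "Tconv (sub (case_nat r Var) t) v \<Longrightarrow> Tconv (App (Lam t) r) v"
  by (rule Tconv_trans[OF Tconv_beta])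
lemma beta_head1: "Tconv (App (sub (case_nat r Var) t) c) v \<Longrightarrow> Tconv (App (App (Lam t) r) c) v"
  by (rule Tconv_trans[OF Tconv_AppL[OF Tconv_beta]])

text \<open>Eta conversion is not a rule of T, but it holds up to conversion for anything convertible
  to an abstraction: \<open>X = \<lambda>k. X k\<close>.\<close>
lemma eta_conv: "Tconv X (Lam B) \<Longrightarrow> Tconv (Lam (App (liftT 0 X) (Var 0))) X"
proof -
  assume X: "Tconv X (Lam B)"
  have "sub (case_nat (Var 0) Var) (liftT (Suc 0) B) = sub Var B"
    unfolding liftT_sub sub_sub by (rule arg_cong[where f="\<lambda>f. sub f B"]) (auto split: nat.split)
  then have beta_B: "Tconv (App (liftT 0 (Lam B)) (Var 0)) B"
    using Tconv_beta[of "liftT (Suc 0) B" "Var 0"] by (simp only: liftT.simps sub_Var)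
  have "Tconv (Lam (App (liftT 0 X) (Var 0))) (Lam (App (liftT 0 (Lam B)) (Var 0)))"
    using X by (intro Tconv_Lam Tconv_AppL Tconv_lift)
  also have "Tconv \<dots> (Lam B)" using beta_B by (rule Tconv_Lam)
  also have "Tconv \<dots> X" using X by (rule Tconv_sym)
  finally show ?thesis .
qed

lemma Tconv_ext:
  assumes "Tconv X (Lam A)" and "Tconv Y (Lam B)"
    and "Tconv (App (liftT 0 X) (Var 0)) (App (liftT 0 Y) (Var 0))"
  shows "Tconv X Y"
proof -
  have "Tconv X (Lam (App (liftT 0 X) (Var 0)))" using eta_conv[OF assms(1)] by (rule Tconv_sym)
  also have "Tconv \<dots> (Lam (App (liftT 0 Y) (Var 0)))" using assms(3) by (rule Tconv_Lam)
  also have "Tconv \<dots> Y" using assms(2) by (rule eta_conv)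
  finally show ?thesis .
qed

section \<open>The CPS translation over term environments\<close>

definition eta_exp :: "tm \<Rightarrow> tm" where
  "eta_exp X = Lam (App (liftT 0 X) (Var 0))"

definition cps_lam :: "tm \<Rightarrow> tm" where
  "cps_lam B = Lam (App (Var 0) (Lam B))"

definition cps_step :: "tm \<Rightarrow> tm" where
  "cps_step S = Lam (Lam (comp (comp (liftT 0 (liftT 0 S)) (ovl (Var 1))) (Var 0)))"

definition cps_suc :: "tm \<Rightarrow> tm" where
  "cps_suc A = Lam (App (liftT 0 A) (Lam (App (Var 1) (TSuc (Var 0)))))"

definition cps_nrec :: "tm \<Rightarrow> tm \<Rightarrow> tm \<Rightarrow> tm" where
  "cps_nrec R S A = Lam (App (liftT 0 A)
     (Lam (App (Nrec (liftT 0 (liftT 0 R)) (liftT 0 (liftT 0 (cps_step S))) (Var 0)) (Var 1))))"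

lemmas cps_combinator_defs = eta_exp_def cps_lam_def cps_step_def cps_suc_def cps_nrec_def

lemma sub_combinators [simp]:
  "sub \<sigma> (comp a b) = comp (sub \<sigma> a) (sub \<sigma> b)"
  "sub \<sigma> (ovl a) = ovl (sub \<sigma> a)"
  "sub \<sigma> (eta_exp a) = eta_exp (sub \<sigma> a)"
  "sub \<sigma> (cps_lam a) = cps_lam (sub (up (up \<sigma>)) a)"
  "sub \<sigma> (cps_step a) = cps_step (sub \<sigma> a)"
  "sub \<sigma> (cps_suc a) = cps_suc (sub \<sigma> a)"
  "sub \<sigma> (cps_nrec r s a) = cps_nrec (sub \<sigma> r) (sub \<sigma> s) (sub \<sigma> a)"
  by (simp_all add: comp_def ovl_def cps_combinator_defs)

lemma Tconv_combinators:
  "Tconv a a' \<Longrightarrow> Tconv b b' \<Longrightarrow> Tconv (comp a b) (comp a' b')"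
  "Tconv a a' \<Longrightarrow> Tconv (cps_lam a) (cps_lam a')"
  "Tconv a a' \<Longrightarrow> Tconv (cps_suc a) (cps_suc a')"
  "Tconv r r' \<Longrightarrow> Tconv s s' \<Longrightarrow> Tconv a a' \<Longrightarrow> Tconv (cps_nrec r s a) (cps_nrec r' s' a')"
  unfolding comp_def cps_combinator_defs
  by (intro Tconv_Lam Tconv_App Tconv_Nrec Tconv_lift Tconv_refl; assumption)+

text \<open>\<open>cpsG \<rho> \<kappa> t\<close> translates \<open>t\<close>, interpreting the lambda-variable \<open>i\<close> by the T-term \<open>\<rho> i\<close>
  and the continuation variable \<open>k\<^sub>\<alpha>\<close> of the mu-variable \<open>\<alpha> = j\<close> by \<open>\<kappa> j\<close>.  Allowing
  arbitrary terms in the environments makes substitution into a translation again a translation.\<close>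
primrec cpsG :: "(nat \<Rightarrow> tm) \<Rightarrow> (nat \<Rightarrow> tm) \<Rightarrow> lmtm \<Rightarrow> tm"
  and cpscG :: "(nat \<Rightarrow> tm) \<Rightarrow> (nat \<Rightarrow> tm) \<Rightarrow> lmcmd \<Rightarrow> tm" where
  "cpsG \<rho> \<kappa> (LVar i) = eta_exp (\<rho> i)"
| "cpsG \<rho> \<kappa> (LLam t) =
     cps_lam (cpsG (case_nat (Var 0) (\<lambda>i. liftT 0 (liftT 0 (\<rho> i)))) (\<lambda>j. liftT 0 (liftT 0 (\<kappa> j))) t)"
| "cpsG \<rho> \<kappa> (LApp t r) = comp (cpsG \<rho> \<kappa> t) (cpsG \<rho> \<kappa> r)"
| "cpsG \<rho> \<kappa> (LMu c) = Lam (cpscG (\<lambda>i. liftT 0 (\<rho> i)) (case_nat (Var 0) (\<lambda>j. liftT 0 (\<kappa> j))) c)"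
| "cpsG \<rho> \<kappa> LZero = ovl Zero"
| "cpsG \<rho> \<kappa> (LSuc t) = cps_suc (cpsG \<rho> \<kappa> t)"
| "cpsG \<rho> \<kappa> (LNrec r s t) = cps_nrec (cpsG \<rho> \<kappa> r) (cpsG \<rho> \<kappa> s) (cpsG \<rho> \<kappa> t)"
| "cpscG \<rho> \<kappa> (LNamed a t) = App (cpsG \<rho> \<kappa> t) (\<kappa> a)"

lemma cpst_eq: "cpst L M t = cpsG (\<lambda>i. Var (L i)) (\<lambda>j. Var (M j)) t"
  and cpsc_eq: "cpsc L M c = cpscG (\<lambda>i. Var (L i)) (\<lambda>j. Var (M j)) c"
proof -
  have case_nat_Var: "(\<lambda>i. Var (case_nat a f i)) = case_nat (Var a) (\<lambda>i. Var (f i))" for a f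
    by (rule ext, rename_tac z, case_tac z) auto
  show "cpst L M t = cpsG (\<lambda>i. Var (L i)) (\<lambda>j. Var (M j)) t"
    and "cpsc L M c = cpscG (\<lambda>i. Var (L i)) (\<lambda>j. Var (M j)) c"
    by (induct t and c arbitrary: L M and L M)
      (simp_all add: cps_combinator_defs Let_def case_nat_Var del: sub_normalise)
qed

lemma cpsG_sub [simp]: "sub \<sigma> (cpsG \<rho> \<kappa> t) = cpsG (\<lambda>i. sub \<sigma> (\<rho> i)) (\<lambda>j. sub \<sigma> (\<kappa> j)) t"
  and cpscG_sub [simp]: "sub \<sigma> (cpscG \<rho> \<kappa> c) = cpscG (\<lambda>i. sub \<sigma> (\<rho> i)) (\<lambda>j. sub \<sigma> (\<kappa> j)) c"
  by (induct t and c arbitrary: \<sigma> \<rho> \<kappa> and \<sigma> \<rho> \<kappa>)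
    (simp_all add: nat.case_distrib cong del: nat.case_cong_weak)

lemma cpsG_Lam: "\<exists>B. cpsG \<rho> \<kappa> t = Lam B"
  by (cases t) (auto simp: comp_def ovl_def cps_combinator_defs)

lemma eta_cps: "Tconv (eta_exp (cpsG \<rho> \<kappa> t)) (cpsG \<rho> \<kappa> t)"
proof -
  obtain B where "cpsG \<rho> \<kappa> t = Lam B" using cpsG_Lam by blast
  then show ?thesis unfolding eta_exp_def by (simp only:) (rule eta_conv, rule Tconv_refl)
qed

text \<open>Environments are built with case distinctions on indices; the simplifier has to rewrite
  inside their branches, which the weak congruence rule for case expressions would prevent.\<close>
declare nat.case_cong_weak [cong del]

lemma cpsG_liftL [simp]:
    "cpsG \<rho> \<kappa> (liftLt k t) = cpsG (\<lambda>i. \<rho> (if i < k then i else Suc i)) \<kappa> t"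
  and cpscG_liftL [simp]:
    "cpscG \<rho> \<kappa> (liftLc k c) = cpscG (\<lambda>i. \<rho> (if i < k then i else Suc i)) \<kappa> c"
proof (induct t and c arbitrary: \<rho> \<kappa> k and \<rho> \<kappa> k)
  case (LLam t)
  have "(\<lambda>i. case_nat (Var 0) (\<lambda>i. liftT 0 (liftT 0 (\<rho> i))) (if i < Suc k then i else Suc i))
     = case_nat (Var 0) (\<lambda>i. liftT 0 (liftT 0 (\<rho> (if i < k then i else Suc i))))"
    by (rule ext, rename_tac z, case_tac z) auto
  then show ?case using LLam by (simp del: sub_normalise)
qed simp_all

lemma cpsG_liftM [simp]:
    "cpsG \<rho> \<kappa> (liftMt k t) = cpsG \<rho> (\<lambda>i. \<kappa> (if i < k then i else Suc i)) t"
  and cpscG_liftM [simp]: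
    "cpscG \<rho> \<kappa> (liftMc k c) = cpscG \<rho> (\<lambda>i. \<kappa> (if i < k then i else Suc i)) c"
proof (induct t and c arbitrary: \<rho> \<kappa> k and \<rho> \<kappa> k)
  case (LMu c)
  have "(\<lambda>i. case_nat (Var 0) (\<lambda>i. liftT 0 (\<kappa> i)) (if i < Suc k then i else Suc i))
     = case_nat (Var 0) (\<lambda>i. liftT 0 (\<kappa> (if i < k then i else Suc i)))"
    by (rule ext, rename_tac z, case_tac z) auto
  then show ?case using LMu by (simp del: sub_normalise)
qed simp_all

lemma cpsG_drop:
    "k \<notin> fcvt t \<Longrightarrow> cpsG \<rho> \<kappa> t = cpsG \<rho> (\<lambda>j. \<kappa> (if j < k then j else Suc j)) (dropMt k t)"
  and cpscG_drop:
    "k \<notin> fcvc c \<Longrightarrow> cpscG \<rho> \<kappa> c = cpscG \<rho> (\<lambda>j. \<kappa> (if j < k then j else Suc j)) (dropMc k c)"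
proof (induct t and c arbitrary: \<rho> \<kappa> k and \<rho> \<kappa> k)
  case (LMu c)
  have "(\<lambda>j. case_nat (Var 0) (\<lambda>j. liftT 0 (\<kappa> j)) (if j < Suc k then j else Suc j))
      = case_nat (Var 0) (\<lambda>j. liftT 0 (\<kappa> (if j < k then j else Suc j)))"
    by (rule ext, rename_tac z, case_tac z) auto
  then show ?case using LMu by (simp del: sub_normalise)
next
  case (LLam t) show ?case using LLam(1)[of k] LLam(2) by (simp del: sub_normalise)
next
  case (LApp t r) show ?case using LApp(1,2)[of k] LApp(3) by (simp del: sub_normalise)
next
  case (LSuc t) show ?case using LSuc(1)[of k] LSuc(2) by (simp del: sub_normalise)
next
  case (LNrec r s t) show ?case using LNrec(1,2,3)[of k] LNrec(4) by (simp del: sub_normalise)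
next
  case (LNamed a u) show ?case using LNamed(1)[of k] LNamed(2) by (auto simp del: sub_normalise)
qed simp_all

text \<open>Inserting the value \<open>x\<close> at position \<open>k\<close> of an environment, as \<open>t[x:=r]\<close> does for indices.\<close>
definition ins_at :: "nat \<Rightarrow> 'a \<Rightarrow> (nat \<Rightarrow> 'a) \<Rightarrow> nat \<Rightarrow> 'a" where
  "ins_at k x \<rho> i = (if i < k then \<rho> i else if i = k then x else \<rho> (i - 1))"

lemma ins_at_0: "ins_at 0 x \<rho> = case_nat x \<rho>"
  by (rule ext, rename_tac z, case_tac z) (auto simp: ins_at_def)

text \<open>Only convertible, not equal,
  because variables are translated to eta-expansions.\<close>
lemma cpsG_substL: "Tconv (cpsG \<rho> \<kappa> (substLt k r t)) (cpsG (ins_at k (cpsG \<rho> \<kappa> r) \<rho>) \<kappa> t)"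
  and cpscG_substL: "Tconv (cpscG \<rho> \<kappa> (substLc k r c)) (cpscG (ins_at k (cpsG \<rho> \<kappa> r) \<rho>) \<kappa> c)"
proof (induct t and c arbitrary: \<rho> \<kappa> k r and \<rho> \<kappa> k r)
  case (LVar i)
  then show ?case by (auto simp: ins_at_def Tconv_sym[OF eta_cps] simp del: sub_normalise)
next
  case (LLam t)
  let ?\<rho>2 = "case_nat (Var 0) (\<lambda>i. liftT 0 (liftT 0 (\<rho> i)))"
  and ?\<kappa>2 = "\<lambda>j. liftT 0 (liftT 0 (\<kappa> j))"
  have "ins_at (Suc k) (cpsG ?\<rho>2 ?\<kappa>2 (liftLt 0 r)) ?\<rho>2
      = case_nat (Var 0) (\<lambda>i. liftT 0 (liftT 0 (ins_at k (cpsG \<rho> \<kappa> r) \<rho> i)))"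
    by (rule ext, rename_tac z, case_tac z) (auto simp: ins_at_def split: nat.split)
  then show ?case using LLam[of ?\<rho>2 ?\<kappa>2 "Suc k" "liftLt 0 r"]
    by (simp only: substLt.simps cpsG.simps) (intro Tconv_combinators)
next
  case (LMu c)
  let ?\<rho>1 = "\<lambda>i. liftT 0 (\<rho> i)" and ?\<kappa>1 = "case_nat (Var 0) (\<lambda>j. liftT 0 (\<kappa> j))"
  have "ins_at k (cpsG ?\<rho>1 ?\<kappa>1 (liftMt 0 r)) ?\<rho>1 = (\<lambda>i. liftT 0 (ins_at k (cpsG \<rho> \<kappa> r) \<rho> i))"
    by (rule ext) (simp add: ins_at_def)
  then show ?case using LMu[of ?\<rho>1 ?\<kappa>1 k "liftMt 0 r"]
    by (simp only: substLt.simps cpsG.simps) (intro Tconv_Lam)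
qed (simp_all del: sub_normalise add: Tconv_combinators Tconv_AppL)

section \<open>Evaluation contexts as continuations\<close>

text \<open>\<open>contE \<rho> \<kappa> E K\<close> is the continuation that a translated term receives when it is placed
  in the hole of \<open>E\<close> and the whole is run with continuation \<open>K\<close>.\<close>
primrec contE :: "(nat \<Rightarrow> tm) \<Rightarrow> (nat \<Rightarrow> tm) \<Rightarrow> ectx \<Rightarrow> tm \<Rightarrow> tm" where
  "contE \<rho> \<kappa> Hole K = K"
| "contE \<rho> \<kappa> (EApp E s) K = contE \<rho> \<kappa> E (Lam (App (App (Var 0) (liftT 0 (cpsG \<rho> \<kappa> s))) (liftT 0 K)))"
| "contE \<rho> \<kappa> (ESuc E) K = contE \<rho> \<kappa> E (Lam (App (liftT 0 K) (TSuc (Var 0))))"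
| "contE \<rho> \<kappa> (ENrec r s E) K =
     contE \<rho> \<kappa> E (Lam (App (Nrec (liftT 0 (cpsG \<rho> \<kappa> r)) (liftT 0 (cps_step (cpsG \<rho> \<kappa> s))) (Var 0))
                        (liftT 0 K)))"

lemma contE_sub [simp]:
  "sub \<sigma> (contE \<rho> \<kappa> E K) = contE (\<lambda>i. sub \<sigma> (\<rho> i)) (\<lambda>j. sub \<sigma> (\<kappa> j)) E (sub \<sigma> K)"
  by (induct E arbitrary: K) simp_all

lemma contE_liftMe [simp]:
  "contE \<rho> \<kappa> (liftMe k E) K = contE \<rho> (\<lambda>i. \<kappa> (if i < k then i else Suc i)) E K"
  by (induct E arbitrary: K) (simp_all del: sub_normalise)

lemma contE_liftLe [simp]:
  "contE \<rho> \<kappa> (liftLe k E) K = contE (\<lambda>i. \<rho> (if i < k then i else Suc i)) \<kappa> E K"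
  by (induct E arbitrary: K) (simp_all del: sub_normalise)

lemma fill_conv: "Tconv (App (cpsG \<rho> \<kappa> (fill E v)) K) (App (cpsG \<rho> \<kappa> v) (contE \<rho> \<kappa> E K))"
proof (induct E arbitrary: K)
  case (EApp E s)
  have "Tconv (App (cpsG \<rho> \<kappa> (fill (EApp E s) v)) K)
     (App (cpsG \<rho> \<kappa> (fill E v)) (Lam (App (App (Var 0) (liftT 0 (cpsG \<rho> \<kappa> s))) (liftT 0 K))))"
    by (simp only: fill.simps cpsG.simps comp_def) (rule beta_head, simp)
  then show ?case using EApp by (simp only: contE.simps) (rule Tconv_trans)
next
  case (ESuc E)
  have "Tconv (App (cpsG \<rho> \<kappa> (fill (ESuc E) v)) K)
     (App (cpsG \<rho> \<kappa> (fill E v)) (Lam (App (liftT 0 K) (TSuc (Var 0)))))"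
    by (simp only: fill.simps cpsG.simps cps_suc_def) (rule beta_head, simp)
  then show ?case using ESuc by (simp only: contE.simps) (rule Tconv_trans)
next
  case (ENrec r s E)
  have "Tconv (App (cpsG \<rho> \<kappa> (fill (ENrec r s E) v)) K)
     (App (cpsG \<rho> \<kappa> (fill E v)) (Lam (App (Nrec (liftT 0 (cpsG \<rho> \<kappa> r))
        (liftT 0 (cps_step (cpsG \<rho> \<kappa> s))) (Var 0)) (liftT 0 K))))"
    by (simp only: fill.simps cpsG.simps cps_nrec_def) (rule beta_head, simp)
  then show ?case using ENrec by (simp only: contE.simps) (rule Tconv_trans)
qed simp

lemma cpsG_msub:
    "Tconv (cpsG \<rho> \<kappa> (msubt k b E t)) (cpsG \<rho> (\<kappa>(k := contE \<rho> \<kappa> E (\<kappa> b))) t)"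
  and cpscG_msub:
    "Tconv (cpscG \<rho> \<kappa> (msubc k b E c)) (cpscG \<rho> (\<kappa>(k := contE \<rho> \<kappa> E (\<kappa> b))) c)"
proof (induct t and c arbitrary: \<rho> \<kappa> k b E and \<rho> \<kappa> k b E)
  case (LLam t)
  let ?\<rho>2 = "case_nat (Var 0) (\<lambda>i. liftT 0 (liftT 0 (\<rho> i)))"
  and ?\<kappa>2 = "\<lambda>j. liftT 0 (liftT 0 (\<kappa> j))"
  have "?\<kappa>2(k := contE ?\<rho>2 ?\<kappa>2 (liftLe 0 E) (?\<kappa>2 b))
      = (\<lambda>j. liftT 0 (liftT 0 ((\<kappa>(k := contE \<rho> \<kappa> E (\<kappa> b))) j)))"
    by (rule ext) simp
  then show ?case using LLam[of ?\<rho>2 ?\<kappa>2 k b "liftLe 0 E"]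
    by (simp only: msubt.simps cpsG.simps) (intro Tconv_combinators)
next
  case (LMu c)
  let ?\<rho>1 = "\<lambda>i. liftT 0 (\<rho> i)" and ?\<kappa>1 = "case_nat (Var 0) (\<lambda>j. liftT 0 (\<kappa> j))"
  have "?\<kappa>1(Suc k := contE ?\<rho>1 ?\<kappa>1 (liftMe 0 E) (?\<kappa>1 (Suc b)))
      = case_nat (Var 0) (\<lambda>j. liftT 0 ((\<kappa>(k := contE \<rho> \<kappa> E (\<kappa> b))) j))"
    by (rule ext, rename_tac z, case_tac z) simp_all
  then show ?case using LMu[of ?\<rho>1 ?\<kappa>1 "Suc k" "Suc b" "liftMe 0 E"]
    by (simp only: msubt.simps cpsG.simps) (intro Tconv_Lam)
next
  case (LNamed a u)
  show ?case
  proof (cases "a = k")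
    case True
    have "Tconv (App (cpsG \<rho> \<kappa> (fill E (msubt k b E u))) (\<kappa> b))
                (App (cpsG \<rho> \<kappa> (msubt k b E u)) (contE \<rho> \<kappa> E (\<kappa> b)))" by (rule fill_conv)
    also have "Tconv \<dots> (App (cpsG \<rho> (\<kappa>(k := contE \<rho> \<kappa> E (\<kappa> b))) u) (contE \<rho> \<kappa> E (\<kappa> b)))"
      using LNamed by (rule Tconv_AppL)
    finally show ?thesis unfolding True by (simp only: msubc.simps cpscG.simps fun_upd_same simp_thms if_True)
  next
    case False
    then show ?thesis using LNamed[of \<rho> \<kappa> k b E] by (simp del: sub_normalise add: Tconv_AppL)
  qed
qed (simp_all del: sub_normalise add: Tconv_combinators)

section \<open>Soundness of the translation for each reduction rule\<close>

lemma cps_conv_by_continuation: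
  assumes "\<And>\<rho> \<kappa> K. Tconv (App (cpsG \<rho> \<kappa> t) K) (App (cpsG \<rho> \<kappa> t') K)"
  shows "Tconv (cpsG \<rho> \<kappa> t) (cpsG \<rho> \<kappa> t')"
proof -
  obtain A B where "cpsG \<rho> \<kappa> t = Lam A" and "cpsG \<rho> \<kappa> t' = Lam B"
    using cpsG_Lam by metis
  moreover have "Tconv (App (liftT 0 (cpsG \<rho> \<kappa> t)) (Var 0)) (App (liftT 0 (cpsG \<rho> \<kappa> t')) (Var 0))"
    using assms by simp
  ultimately show ?thesis by (metis Tconv_ext Tconv_refl)
qed

lemma cps_run_mu: "Tconv (App (cpsG \<rho> \<kappa> (LMu c)) K) (cpscG \<rho> (case_nat K \<kappa>) c)"
  by (simp only: cpsG.simps) (rule beta_head, simp add: nat.case_distrib)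


text \<open>Rules \<open>(\<mu>S)\<close>, \<open>(\<mu>R)\<close> and \<open>(\<mu>\<nat>)\<close> are instances of: \<open>E[\<mu>\<alpha>.c] = \<mu>\<alpha>.c[\<alpha>:=\<alpha> E]\<close>.\<close>
lemma cps_mu_context:
  "Tconv (cpsG \<rho> \<kappa> (fill E (LMu c))) (cpsG \<rho> \<kappa> (LMu (msubc 0 0 (liftMe 0 E) c)))"
proof (rule cps_conv_by_continuation)
  fix \<rho> \<kappa> K
  have upd: "(case_nat K \<kappa>)(0 := contE \<rho> (case_nat K \<kappa>) (liftMe 0 E) (case_nat K \<kappa> 0))
      = case_nat (contE \<rho> \<kappa> E K) \<kappa>"
    by (rule ext, rename_tac z, case_tac z) simp_all
  have "Tconv (App (cpsG \<rho> \<kappa> (fill E (LMu c))) K) (App (cpsG \<rho> \<kappa> (LMu c)) (contE \<rho> \<kappa> E K))"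
    by (rule fill_conv)
  also have "Tconv \<dots> (cpscG \<rho> (case_nat (contE \<rho> \<kappa> E K) \<kappa>) c)"
    by (rule cps_run_mu)
  also have "Tconv \<dots> (cpscG \<rho> (case_nat K \<kappa>) (msubc 0 0 (liftMe 0 E) c))"
    using cpscG_msub[of \<rho> "case_nat K \<kappa>" 0 0 "liftMe 0 E" c] unfolding upd by (rule Tconv_sym)
  also have "Tconv \<dots> (App (cpsG \<rho> \<kappa> (LMu (msubc 0 0 (liftMe 0 E) c))) K)"
    by (rule Tconv_sym, rule cps_run_mu)
  finally show "Tconv (App (cpsG \<rho> \<kappa> (fill E (LMu c))) K)
      (App (cpsG \<rho> \<kappa> (LMu (msubc 0 0 (liftMe 0 E) c))) K)" .
qed

lemma cps_mu_eta:
  assumes "0 \<notin> fcvt t"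
  shows "Tconv (cpsG \<rho> \<kappa> (LMu (LNamed 0 t))) (cpsG \<rho> \<kappa> (dropMt 0 t))"
proof (rule cps_conv_by_continuation)
  fix \<rho> \<kappa> K
  have "cpsG \<rho> (case_nat K \<kappa>) t = cpsG \<rho> \<kappa> (dropMt 0 t)"
    using cpsG_drop[OF assms, of \<rho> "case_nat K \<kappa>"] by simp
  then show "Tconv (App (cpsG \<rho> \<kappa> (LMu (LNamed 0 t))) K) (App (cpsG \<rho> \<kappa> (dropMt 0 t)) K)"
    using cps_run_mu[of \<rho> \<kappa> "LNamed 0 t" K] by simp
qed

lemma fresh_msubc: "k \<noteq> b \<Longrightarrow> k \<notin> fcvc (msubc k b Hole c)"
  and fresh_msubt: "k \<noteq> b \<Longrightarrow> k \<notin> fcvt (msubt k b Hole t)"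
  by (induct c and t arbitrary: k b and k b) auto

lemma cps_mu_rename:
  "Tconv (cpscG \<rho> \<kappa> (LNamed a (LMu c))) (cpscG \<rho> \<kappa> (dropMc 0 (msubc 0 (Suc a) Hole c)))"
proof -
  let ?\<kappa>a = "case_nat (\<kappa> a) \<kappa>"
  have upd: "?\<kappa>a(0 := contE \<rho> ?\<kappa>a Hole (?\<kappa>a (Suc a))) = ?\<kappa>a"
    by (rule ext) (simp split: nat.split)
  have "Tconv (cpscG \<rho> \<kappa> (LNamed a (LMu c))) (cpscG \<rho> ?\<kappa>a c)"
    using cps_run_mu by simp
  also have "Tconv \<dots> (cpscG \<rho> ?\<kappa>a (msubc 0 (Suc a) Hole c))"
    using cpscG_msub[of \<rho> ?\<kappa>a 0 "Suc a" Hole c] unfolding upd by (rule Tconv_sym)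
  also have "\<dots> = cpscG \<rho> \<kappa> (dropMc 0 (msubc 0 (Suc a) Hole c))"
    using cpscG_drop[OF fresh_msubc, of 0 "Suc a" \<rho> ?\<kappa>a c] by simp
  finally show ?thesis .
qed

lemma cps_run_lam:
  "Tconv (App (cpsG \<rho> \<kappa> (LLam t)) (Lam (App (App (Var 0) (liftT 0 R)) (liftT 0 K))))
         (App (cpsG (case_nat R \<rho>) \<kappa> t) K)"
  unfolding cpsG.simps cps_lam_def
  by (rule beta_head, simp, rule beta_head, simp, rule beta_head1, simp add: nat.case_distrib)

lemma cps_beta: "Tconv (cpsG \<rho> \<kappa> (LApp (LLam t) r)) (cpsG \<rho> \<kappa> (substLt 0 r t))"
proof (rule cps_conv_by_continuation)
  fix \<rho> \<kappa> K
  let ?R = "cpsG \<rho> \<kappa> r"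
  have "Tconv (App (cpsG \<rho> \<kappa> (LApp (LLam t) r)) K)
     (App (cpsG \<rho> \<kappa> (LLam t)) (Lam (App (App (Var 0) (liftT 0 ?R)) (liftT 0 K))))"
    using fill_conv[of \<rho> \<kappa> "EApp Hole r" "LLam t" K] by (simp only: fill.simps contE.simps)
  also have "Tconv \<dots> (App (cpsG (case_nat ?R \<rho>) \<kappa> t) K)"
    by (rule cps_run_lam)
  also have "Tconv \<dots> (App (cpsG \<rho> \<kappa> (substLt 0 r t)) K)"
    using cpsG_substL[of \<rho> \<kappa> 0 r t] unfolding ins_at_0 by (rule Tconv_AppL[OF Tconv_sym])
  finally show "Tconv (App (cpsG \<rho> \<kappa> (LApp (LLam t) r)) K) (App (cpsG \<rho> \<kappa> (substLt 0 r t)) K)" .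
qed

definition num :: "nat \<Rightarrow> tm" where
  "num n = (TSuc ^^ n) Zero"

lemma num_simps: "num 0 = Zero" "num (Suc n) = TSuc (num n)"
  by (simp_all add: num_def)

lemma lnum_simps: "lnum 0 = LZero" "lnum (Suc n) = LSuc (lnum n)"
  by (simp_all add: lnum_def)

lemma sub_num [simp]: "sub \<sigma> (num n) = num n"
  by (induct n) (simp_all add: num_simps)

lemma cps_lnum: "Tconv (cpsG \<rho> \<kappa> (lnum n)) (ovl (num n))"
proof (induct n)
  case (Suc n)
  have "Tconv (cpsG \<rho> \<kappa> (lnum (Suc n))) (cps_suc (ovl (num n)))"
    unfolding lnum_simps cpsG.simps using Suc by (rule Tconv_combinators)
  also have "Tconv \<dots> (ovl (num (Suc n)))"
    unfolding cps_suc_def ovl_def num_simps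
    by (rule Tconv_Lam, simp only: liftT_sub sub.simps, rule beta_head, simp, rule beta_head, simp)
  finally show ?case .
qed (simp add: lnum_simps num_simps)

lemma cps_step_run: "Tconv (App (App (cps_step S) N) Q) (comp (comp S (ovl N)) Q)"
  unfolding cps_step_def by (rule beta_head1, simp only: sub.simps, rule beta_head, simp)

lemma cps_run_nrec_num:
  "Tconv (App (cpsG \<rho> \<kappa> (LNrec r s (lnum n))) K)
         (App (Nrec (cpsG \<rho> \<kappa> r) (cps_step (cpsG \<rho> \<kappa> s)) (num n)) K)"
proof -
  let ?K' = "Lam (App (Nrec (liftT 0 (cpsG \<rho> \<kappa> r)) (liftT 0 (cps_step (cpsG \<rho> \<kappa> s))) (Var 0))
                (liftT 0 K))"
  have "Tconv (App (cpsG \<rho> \<kappa> (LNrec r s (lnum n))) K) (App (cpsG \<rho> \<kappa> (lnum n)) ?K')"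
    using fill_conv[of \<rho> \<kappa> "ENrec r s Hole" "lnum n" K] by (simp only: fill.simps contE.simps)
  also have "Tconv \<dots> (App (ovl (num n)) ?K')"
    using cps_lnum by (rule Tconv_AppL)
  also have "Tconv \<dots> (App (Nrec (cpsG \<rho> \<kappa> r) (cps_step (cpsG \<rho> \<kappa> s)) (num n)) K)"
    unfolding ovl_def by (rule beta_head, simp, rule beta_head, simp)
  finally show ?thesis .
qed

lemma cps_nrec0: "Tconv (cpsG \<rho> \<kappa> (LNrec r s LZero)) (cpsG \<rho> \<kappa> r)"
proof (rule cps_conv_by_continuation)
  fix \<rho> \<kappa> K
  show "Tconv (App (cpsG \<rho> \<kappa> (LNrec r s LZero)) K) (App (cpsG \<rho> \<kappa> r) K)"
    using cps_run_nrec_num[of \<rho> \<kappa> r s 0 K] Tred_conv[OF Tred.nrec0]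
    unfolding lnum_simps num_simps by (meson Tconv_AppL Tconv_trans)
qed

lemma nrec_num_lam: "\<exists>B. Tconv (Nrec (Lam R) (cps_step S) (num n)) (Lam B)"
proof (cases n)
  case 0
  then show ?thesis using Tred_conv[OF Tred.nrec0] by (auto simp: num_simps)
next
  case (Suc m)
  let ?Q = "Nrec (Lam R) (cps_step S) (num m)"
  have "Tconv (Nrec (Lam R) (cps_step S) (num n)) (App (App (cps_step S) (num m)) ?Q)"
    unfolding Suc num_simps by (rule Tred_conv, rule Tred.nrecS)
  also have "Tconv \<dots> (comp (comp S (ovl (num m))) ?Q)"
    by (rule cps_step_run)
  finally show ?thesis unfolding comp_def by blast
qed

lemma cps_nrec_num:
  "Tconv (cpsG \<rho> \<kappa> (LNrec r s (lnum n))) (Nrec (cpsG \<rho> \<kappa> r) (cps_step (cpsG \<rho> \<kappa> s)) (num n))"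
proof -
  let ?X = "cpsG \<rho> \<kappa> (LNrec r s (lnum n))"
  and ?Y = "Nrec (cpsG \<rho> \<kappa> r) (cps_step (cpsG \<rho> \<kappa> s)) (num n)"
  obtain A where A: "?X = Lam A" using cpsG_Lam by blast
  obtain R where "cpsG \<rho> \<kappa> r = Lam R" using cpsG_Lam by blast
  then obtain B where B: "Tconv ?Y (Lam B)" using nrec_num_lam by metis
  have run: "Tconv (App (liftT 0 ?X) (Var 0)) (App (liftT 0 ?Y) (Var 0))"
    using cps_run_nrec_num by simp
  show ?thesis by (rule Tconv_ext[OF _ B run]) (simp only: A, rule Tconv_refl)
qed

lemma cps_nrecS:
  "Tconv (cpsG \<rho> \<kappa> (LNrec r s (LSuc (lnum n))))
         (cpsG \<rho> \<kappa> (LApp (LApp s (lnum n)) (LNrec r s (lnum n))))"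
proof (rule cps_conv_by_continuation)
  fix \<rho> \<kappa> K
  let ?R = "cpsG \<rho> \<kappa> r" and ?S = "cpsG \<rho> \<kappa> s"
  let ?Q = "Nrec ?R (cps_step ?S) (num n)"
  have "Tconv (App (cpsG \<rho> \<kappa> (LNrec r s (LSuc (lnum n)))) K) (App (Nrec ?R (cps_step ?S) (TSuc (num n))) K)"
    using cps_run_nrec_num[of \<rho> \<kappa> r s "Suc n" K] by (simp only: lnum_simps num_simps)
  also have "Tconv \<dots> (App (App (App (cps_step ?S) (num n)) ?Q) K)"
    by (rule Tconv_AppL, rule Tred_conv, rule Tred.nrecS)
  also have "Tconv \<dots> (App (comp (comp ?S (ovl (num n))) ?Q) K)"
    by (rule Tconv_AppL, rule cps_step_run)
  also have "Tconv \<dots> (App (cpsG \<rho> \<kappa> (LApp (LApp s (lnum n)) (LNrec r s (lnum n)))) K)"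
    unfolding cpsG.simps(3)
    by (intro Tconv_AppL Tconv_combinators(1) Tconv_refl Tconv_sym[OF cps_lnum] Tconv_sym[OF cps_nrec_num])
  finally show "Tconv (App (cpsG \<rho> \<kappa> (LNrec r s (LSuc (lnum n)))) K)
    (App (cpsG \<rho> \<kappa> (LApp (LApp s (lnum n)) (LNrec r s (lnum n)))) K)" .
qed


lemma cps_red: "lmred_t t t' \<Longrightarrow> Tconv (cpsG \<rho> \<kappa> t) (cpsG \<rho> \<kappa> t')"
  and cps_redc: "lmred_c c c' \<Longrightarrow> Tconv (cpscG \<rho> \<kappa> c) (cpscG \<rho> \<kappa> c')"
proof (induction arbitrary: \<rho> \<kappa> and \<rho> \<kappa> rule: lmred_t_lmred_c.inducts)
  case (beta t r)
  show ?case by (rule cps_beta)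
next
  case (muS c)
  show ?case using cps_mu_context[of \<rho> \<kappa> "ESuc Hole" c] by (simp only: fill.simps liftMe.simps)
next
  case (muR c s)
  show ?case using cps_mu_context[of \<rho> \<kappa> "EApp Hole s" c] by (simp only: fill.simps liftMe.simps)
next
  case (muEta t)
  then show ?case by (rule cps_mu_eta)
next
  case (muI a c)
  show ?case by (rule cps_mu_rename)
next
  case (nrec0 r s)
  show ?case by (rule cps_nrec0)
next
  case (nrecS r s n)
  show ?case by (rule cps_nrecS)
next
  case (muN r s c)
  show ?case using cps_mu_context[of \<rho> \<kappa> "ENrec r s Hole" c] by (simp only: fill.simps liftMe.simps)
next
  case (c_mu c c')
  then show ?case by (simp only: cpsG.simps) (rule Tconv_Lam)
next
  case (c_named t t' a)
  then show ?case by (simp only: cpscG.simps) (rule Tconv_AppL)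
qed (simp only: cpsG.simps, (intro Tconv_combinators Tconv_refl; assumption))+

theorem mainTheorem6:
  fixes t1 t2 :: lmtm
  assumes "lmconv t1 t2"
  shows "Tconv (cps t1) (cps t2)"
proof -
  let ?cps = "cpsG (\<lambda>i. Var (2 * i)) (\<lambda>j. Var (2 * j + 1))"
  have "equivclp Tred (?cps t1) (?cps t2)"
    using assms unfolding lmconv_def
    by (rule equivclp_map[where f="?cps", rotated]) (simp only: cps_red Tconv_def[symmetric])
  then show ?thesis unfolding cps_def cpst_eq Tconv_def .
qed

end
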